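(* Let $C_0(h)=\frac{m^1h^{-\kappa-1}\big(h+\frac{f(I)}{\delta}\big)}{(1-\alpha)\delta}e^{\delta\kappa T}+1$ and $c_1=\frac12\big(\frac{\alpha\theta}{1-\alpha}\big)^2+\frac{\alpha}{1-\alpha}\big(r+\frac12\theta^2\big)>0$. Then $$0\le W_h(t,z,h)\le z^{\frac{\alpha}{\alpha-1}}(1-\alpha)\alpha^{\frac{\alpha}{1-\alpha}}C_0(h)\frac{e^{c_1T}}{c_1}\quad\text{for all }(t,z,h)\in\mathcal{O}.$$ Moreover, $\lim_{z\to\infty}W_h(t,z,h)=0$ and $\lim_{z\to0}W_h(t,z,h)=\infty$ for $(t,h)\in[0,T)\times\mathbb{R}_+$.
   Context: Fix constants $T>0$, $r>0$, $\mu\in\mathbb{R}$, $\sigma>0$, $\rho>0$, $m^0\ge 0$, $m^1\ge 0$, $\kappa>0$, $\delta>0$, $\alpha\in(0,1)$, $I>0$ and a number $f(I)>0$. Write $\mathbb{R}_+=(0,\infty)$, $\mathcal{O}=[0,T]\times\mathbb{R}_+^2$, $\theta=(\mu-r)/\sigma$. Let $B$ be a standard Brownian motion. Let $\widehat u(z,h)=(1-\alpha)(z/\alpha)^{\alpha/(\alpha-1)}h$. For $(t,z,h)\in\mathcal{O}$ and $s\in[t,T]$ let $H^2_s=he^{-\delta(s-t)}+\frac{f(I)}{\delta}(1-e^{-\delta(s-t)})$, $M^{H^2}_s=m^0+m^1(H^2_s)^{-\kappa}$, and let $Z^2$ solve $dZ^2_s=(\rho-r+M^{H^2}_s)Z^2_s\,ds-\theta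 Z^2_s\,dB_s$, $Z^2_t=z$. Define $W(t,z,h)=\mathbb{E}\big[\int_t^T e^{-\int_t^s(\rho+M^{H^2}_u)du}\,\widehat u(Z^2_s,H^2_s)\,ds\big]$, and let $W_h$ be its partial derivative in $h$. *)

theory Defs
  imports "HOL-Probability.Probability"
begin

definition std_BM :: "'a measure \<Rightarrow> (real \<Rightarrow> 'a \<Rightarrow> real) \<Rightarrow> bool" where
  "std_BM M B \<longleftrightarrow> prob_space M
     \<and> (\<forall>s. B s \<in> borel_measurable M)
     \<and> (\<forall>\<omega>\<in>space M. B 0 \<omega> = 0)
     \<and> (\<forall>\<omega>\<in>space M. continuous_on {0..} (\<lambda>s. B s \<omega>))
     \<and> (\<forall>t s. 0 \<le> t \<and> t < s \<longrightarrow>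
          distributed M lborel (\<lambda>\<omega>. B s \<omega> - B t \<omega>)
            (\<lambda>x. ennreal (normal_density 0 (sqrt (s - t)) x)))
     \<and> (\<forall>(ts::nat \<Rightarrow> real) n. 0 \<le> ts 0 \<and> (\<forall>i<n. ts i \<le> ts (Suc i)) \<longrightarrow>
          prob_space.indep_vars M (\<lambda>_. borel) (\<lambda>i \<omega>. B (ts (Suc i)) \<omega> - B (ts i) \<omega>) {..<n})"

definition u_hat :: "real \<Rightarrow> real \<Rightarrow> real \<Rightarrow> real" where
  "u_hat \<alpha> z h = (1 - \<alpha>) * (z / \<alpha>) powr (\<alpha> / (\<alpha> - 1)) * h"

definition H2 :: "real \<Rightarrow> real \<Rightarrow> real \<Rightarrow> real \<Rightarrow> real \<Rightarrow> real" where
  "H2 \<delta> fI t h s = h * exp (- \<delta> * (s - t)) + fI / \<delta> * (1 - exp (- \<delta> * (s - t)))"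

definition MH2 :: "real \<Rightarrow> real \<Rightarrow> real \<Rightarrow> real \<Rightarrow> real \<Rightarrow> real \<Rightarrow> real \<Rightarrow> real \<Rightarrow> real" where
  "MH2 m0 m1 \<kappa> \<delta> fI t h s = m0 + m1 * (H2 \<delta> fI t h s) powr (- \<kappa>)"

text \<open>\<open>Z^2_s\<close>: the (unique strong) solution of the linear SDE
  \<open>dZ = (\<rho> - r + M_s) Z ds - \<theta> Z dB_s\<close>, \<open>Z_t = z\<close>, written explicitly.\<close>
definition Z2 :: "(real \<Rightarrow> 'a \<Rightarrow> real) \<Rightarrow> real \<Rightarrow> real \<Rightarrow> real \<Rightarrow> real \<Rightarrow> real \<Rightarrow> real
                 \<Rightarrow> real \<Rightarrow> real \<Rightarrow> real \<Rightarrow> real \<Rightarrow> real \<Rightarrow> real \<Rightarrow> 'a \<Rightarrow> real" where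
  "Z2 B r \<rho> \<theta> m0 m1 \<kappa> \<delta> fI t z h s \<omega> =
     z * exp ((\<rho> - r) * (s - t) + (LINT u:{t..s}|lborel. MH2 m0 m1 \<kappa> \<delta> fI t h u)
              - \<theta>\<^sup>2 / 2 * (s - t) - \<theta> * (B s \<omega> - B t \<omega>))"

definition W :: "'a measure \<Rightarrow> (real \<Rightarrow> 'a \<Rightarrow> real) \<Rightarrow> real \<Rightarrow> real \<Rightarrow> real \<Rightarrow> real \<Rightarrow> real
                 \<Rightarrow> real \<Rightarrow> real \<Rightarrow> real \<Rightarrow> real \<Rightarrow> real \<Rightarrow> real \<Rightarrow> real \<Rightarrow> real \<Rightarrow> real" where
  "W M B T r \<rho> \<theta> m0 m1 \<kappa> \<delta> \<alpha> fI t z h =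
     (\<integral>\<omega>. (LINT s:{t..T}|lborel.
          exp (- (LINT u:{t..s}|lborel. \<rho> + MH2 m0 m1 \<kappa> \<delta> fI t h u))
          * u_hat \<alpha> (Z2 B r \<rho> \<theta> m0 m1 \<kappa> \<delta> fI t z h s \<omega>) (H2 \<delta> fI t h s)) \<partial>M)"

end

theory Submission
  imports Defs "HOL-Real_Asymp.Real_Asymp"
begin

text \<open>The drift of \<open>Z\<^sup>2\<close> involves only the deterministic habit \<open>H\<^sup>2\<close> and \<open>\<hat>u(\<cdot>, h)\<close> is a power of
  \<open>z\<close>, so the integrand of \<open>W\<close> is \<open>z\<^bsup>\<alpha>/(\<alpha>-1)\<^esup>\<close> times a deterministic function of \<open>s\<close> times
  \<open>exp (l (B\<^sub>s - B\<^sub>t))\<close>, \<open>l = \<alpha>\<theta>/(1-\<alpha>)\<close>. Tonelli and the Gaussian moment generating function give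
  \<open>W(t,z,h) = z\<^bsup>\<alpha>/(\<alpha>-1)\<^esup>(1-\<alpha>)\<alpha>\<^bsup>\<alpha>/(1-\<alpha>)\<^esup> G(h)\<close> with
  \<open>G(h) = \<integral>\<^sub>t\<^sup>T H\<^sub>s exp (c(s-t) - \<Phi>\<^sub>s/(1-\<alpha>)) ds\<close>, \<open>\<Phi>\<^sub>s = \<integral>\<^sub>t\<^sup>s M\<^sub>u du\<close>, \<open>c = c\<^sub>1 - \<rho>/(1-\<alpha>)\<close>.
  Differentiating under the integral sign, the \<open>h\<close>-derivative of the integrand of \<open>G\<close> is
  \<open>e\<^bsup>-\<delta>(s-t)\<^esup> - H\<^sub>s \<partial>\<^sub>h\<Phi>\<^sub>s/(1-\<alpha>)\<close> times a positive factor at most \<open>e\<^bsup>c(s-t)\<^esup>\<close>; since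
  \<open>0 \<le> -\<partial>\<^sub>h\<Phi>\<^sub>s \<le> m\<^sup>1h\<^bsup>-\<kappa>-1\<^esup>e\<^bsup>\<delta>\<kappa>T\<^esup>/\<delta>\<close> and \<open>H\<^sub>s \<le> h + f(I)/\<delta>\<close>, this gives
  \<open>0 \<le> G'(h) \<le> C\<^sub>0(h) e\<^bsup>c\<^sub>1T\<^esup>/c\<^sub>1\<close>, and \<open>G'(h) > 0\<close> when \<open>t < T\<close>. The limits in \<open>z\<close> come from the
  negative exponent \<open>\<alpha>/(\<alpha>-1)\<close>.\<close>

lemma continuous_on_Pair_slice:
  assumes "continuous_on (U \<times> S) (\<lambda>(x, y). f x y)" "x \<in> U"
  shows "continuous_on S (f x)"
  using continuous_on_o_Pair[OF assms] by (simp add: o_def)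

lemma set_integral_Icc_eq_integral:
  fixes f :: "real \<Rightarrow> real"
  assumes "continuous_on {a..b} f"
  shows "(LINT x:{a..b}|lborel. f x) = integral {a..b} f"
  by (rule set_borel_integral_eq_integral(2)[OF borel_integrable_atLeastAtMost'[OF assms]])

lemma integral_exp_affine:
  fixes k t s :: real
  assumes "k \<noteq> 0" "t \<le> s"
  shows "integral {t..s} (\<lambda>u. exp (k * (u - t))) = (exp (k * (s - t)) - 1) / k"
proof -
  have "((\<lambda>u. exp (k * (u - t))) has_integral exp (k * (s - t)) / k - exp (k * (t - t)) / k) {t..s}"
  proof (rule fundamental_theorem_of_calculus[OF assms(2)])
    fix x assume "x \<in> {t..s}"
    have "((\<lambda>u. exp (k * (u - t)) / k) has_real_derivative exp (k * (x - t))) (at x within {t..s})"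
      using assms(1) by (auto intro!: derivative_eq_intros)
    then show "((\<lambda>u. exp (k * (u - t)) / k) has_vector_derivative exp (k * (x - t))) (at x within {t..s})"
      by (simp add: has_real_derivative_iff_has_vector_derivative)
  qed
  then show ?thesis by (simp add: integral_unique diff_divide_distrib)
qed

lemma integral_exp_affine_le:
  fixes k t s T :: real
  assumes "0 < k" "0 \<le> t" "t \<le> s" "s \<le> T"
  shows "integral {t..s} (\<lambda>u. exp (k * (u - t))) \<le> exp (k * T) / k"
proof -
  have "exp (k * (s - t)) - 1 \<le> exp (k * T)"
    using assms by (smt (verit) exp_le_cancel_iff mult_left_mono)
  then show ?thesis
    using assms by (simp add: integral_exp_affine divide_right_mono)
qed

lemma integral_rescale_unit_interval:
  fixes f :: "real \<Rightarrow> real"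
  assumes "continuous_on {a..s} f" "a \<le> s"
  shows "integral {a..s} f = (s - a) * integral {0..1} (\<lambda>v. f (a + (s - a) * v))"
proof (cases "s = a")
  case False
  with assms(2) have pos: "s - a > 0" by simp
  have "(f has_integral integral {a..s} f) (cbox a s)"
    using integrable_continuous_interval[OF assms(1)] by (simp add: has_integral_integral)
  from has_integral_affinity'[OF this pos, of a]
  have "((\<lambda>v. f (a + (s - a) * v)) has_integral integral {a..s} f / (s - a)) {0..1}"
    using pos by (simp add: divide_inverse add.commute mult.commute)
  then show ?thesis using pos by (simp add: integral_unique)
qed simp

text \<open>Rescaling to the fixed interval [0,1] moves the upper limit into the integrand, where the
  continuity of parametric integrals applies.\<close>
lemma continuous_on_integral_upper_limit:
  fixes f :: "'a::topological_space \<Rightarrow> real \<Rightarrow> real"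
  assumes cont: "continuous_on (U \<times> {a..b}) (\<lambda>(x, u). f x u)"
  shows "continuous_on (U \<times> {a..b}) (\<lambda>(x, s). integral {a..s} (f x))"
proof -
  have "a + (s - a) * v \<le> b" if "s \<le> b" "a \<le> s" "v \<le> 1" for s v
    using mult_left_mono[of v 1 "s - a"] that by simp
  then have "continuous_on ((U \<times> {a..b}) \<times> cbox 0 1)
      (\<lambda>y. (\<lambda>(x, u). f x u) (fst (fst y), a + (snd (fst y) - a) * snd y))"
    by (intro continuous_on_compose2[OF cont] continuous_intros) auto
  then have rescaled_cont:
    "continuous_on ((U \<times> {a..b}) \<times> cbox 0 1) (\<lambda>(y, v). f (fst y) (a + (snd y - a) * v))"
    by (simp add: case_prod_beta)
  have "continuous_on (U \<times> {a..b}) (\<lambda>y. (snd y - a) * integral (cbox 0 1) (\<lambda>v. f (fst y) (a + (snd y - a) * v)))"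
    by (intro continuous_intros integral_continuous_on_param[OF rescaled_cont])
  then show ?thesis
  proof (rule continuous_on_eq)
    fix y assume "y \<in> U \<times> {a..b}"
    moreover have "continuous_on {a..s} (f x)" if "x \<in> U" "s \<le> b" for x s
      by (rule continuous_on_Pair_slice[OF continuous_on_subset[OF cont]]) (use that in auto)
    ultimately show "(snd y - a) * integral (cbox 0 1) (\<lambda>v. f (fst y) (a + (snd y - a) * v))
        = (\<lambda>(x, s). integral {a..s} (f x)) y"
      by (auto simp: integral_rescale_unit_interval)
  qed
qed

lemma normal_density_mult_exp:
  fixes \<sigma> l x :: real
  assumes "\<sigma> > 0"
  shows "normal_density 0 \<sigma> x * exp (l * x) = exp (l\<^sup>2 * \<sigma>\<^sup>2 / 2) * normal_density (l * \<sigma>\<^sup>2) \<sigma> x"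
proof -
  have "- (x - 0)\<^sup>2 / (2 * \<sigma>\<^sup>2) + l * x = l\<^sup>2 * \<sigma>\<^sup>2 / 2 + - (x - l * \<sigma>\<^sup>2)\<^sup>2 / (2 * \<sigma>\<^sup>2)"
    using assms by (simp add: field_simps power2_eq_square)
  then show ?thesis
    unfolding normal_density_def by (simp add: exp_add[symmetric] ac_simps)
qed

lemma std_BM_exp_increment:
  assumes BM: "std_BM M B" and "0 \<le> t" "t \<le> s"
  shows "(\<integral>\<^sup>+\<omega>. ennreal (exp (l * (B s \<omega> - B t \<omega>))) \<partial>M) = ennreal (exp (l\<^sup>2 * (s - t) / 2))"
proof (cases "s = t")
  case True
  have "prob_space M"
    using BM by (simp add: std_BM_def)
  then show ?thesis
    using True prob_space.emeasure_space_1 by simp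
next
  case False
  define \<sigma> where "\<sigma> = sqrt (s - t)"
  have \<sigma>: "\<sigma> > 0" "\<sigma>\<^sup>2 = s - t"
    using False assms by (auto simp: \<sigma>_def)
  have distr: "distributed M lborel (\<lambda>\<omega>. B s \<omega> - B t \<omega>) (\<lambda>x. ennreal (normal_density 0 \<sigma> x))"
    using BM assms False unfolding std_BM_def \<sigma>_def by auto
  have "(\<integral>\<^sup>+\<omega>. ennreal (exp (l * (B s \<omega> - B t \<omega>))) \<partial>M)
      = (\<integral>\<^sup>+x. ennreal (normal_density 0 \<sigma> x) * ennreal (exp (l * x)) \<partial>lborel)"
    by (rule distributed_nn_integral[OF distr, symmetric]) simp
  also have "\<dots> = (\<integral>\<^sup>+x. ennreal (exp (l\<^sup>2 * \<sigma>\<^sup>2 / 2)) * ennreal (normal_density (l * \<sigma>\<^sup>2) \<sigma> x) \<partial>lborel)"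
    by (intro nn_integral_cong) (simp add: ennreal_mult'[symmetric] normal_density_mult_exp[OF \<sigma>(1)])
  also have "\<dots> = ennreal (exp (l\<^sup>2 * \<sigma>\<^sup>2 / 2)) * (\<integral>\<^sup>+x. ennreal (normal_density (l * \<sigma>\<^sup>2) \<sigma> x) \<partial>lborel)"
    by (rule nn_integral_cmult) simp
  also have "(\<integral>\<^sup>+x. ennreal (normal_density (l * \<sigma>\<^sup>2) \<sigma> x) \<partial>lborel) = 1"
    using \<sigma>(1) by (subst nn_integral_eq_integral) auto
  finally show ?thesis
    using \<sigma>(2) by simp
qed

lemma LIMSEQ_floor_mult_divide:
  fixes y :: real
  shows "(\<lambda>n. real_of_int \<lfloor>real (Suc n) * y\<rfloor> / real (Suc n)) \<longlonglongrightarrow> y"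
proof (rule tendsto_sandwich[where f = "\<lambda>n. y - 1 / real (Suc n)" and h = "\<lambda>n. y"])
  have "y - 1 / real (Suc n) \<le> real_of_int \<lfloor>real (Suc n) * y\<rfloor> / real (Suc n)" for n
  proof -
    have "y - 1 / real (Suc n) = (real (Suc n) * y - 1) / real (Suc n)"
      by (simp add: field_simps)
    also have "\<dots> \<le> real_of_int \<lfloor>real (Suc n) * y\<rfloor> / real (Suc n)"
      by (intro divide_right_mono) linarith+
    finally show ?thesis .
  qed
  then show "\<forall>\<^sub>F n in sequentially. y - 1 / real (Suc n) \<le> real_of_int \<lfloor>real (Suc n) * y\<rfloor> / real (Suc n)"
    by simp
  have "real_of_int \<lfloor>real (Suc n) * y\<rfloor> \<le> real (Suc n) * y" for n
    by linarith
  then show "\<forall>\<^sub>F n in sequentially. real_of_int \<lfloor>real (Suc n) * y\<rfloor> / real (Suc n) \<le> y"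
    by (intro always_eventually allI) (simp add: field_simps)
  show "(\<lambda>n. y - 1 / real (Suc n)) \<longlonglongrightarrow> y"
    using tendsto_diff[OF tendsto_const LIMSEQ_inverse_real_of_nat, of y]
    by (simp add: inverse_eq_divide)
qed simp

text \<open>The time is approximated from the grid of mesh 1/(n+1); on each grid point the process is
  measurable in \<open>\<omega>\<close>, and the grid index is a countable measurable choice.\<close>
lemma measurable_continuous_paths:
  fixes B :: "real \<Rightarrow> 'a \<Rightarrow> real" and \<tau> :: "real \<Rightarrow> real"
  assumes B_meas: "\<And>s. B s \<in> borel_measurable M"
    and paths: "\<And>\<omega>. \<omega> \<in> space M \<Longrightarrow> continuous_on {0..} (\<lambda>s. B s \<omega>)"
    and \<tau>_meas: "\<tau> \<in> borel_measurable borel" and \<tau>_nonneg: "\<And>s. 0 \<le> \<tau> s"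
  shows "(\<lambda>(\<omega>, s). B (\<tau> s) \<omega>) \<in> borel_measurable (M \<Otimes>\<^sub>M lborel)"
proof (rule borel_measurable_LIMSEQ_real
    [where u = "\<lambda>n (\<omega>, s). B (real_of_int \<lfloor>real (Suc n) * \<tau> s\<rfloor> / real (Suc n)) \<omega>"])
  fix x :: "'a \<times> real" assume "x \<in> space (M \<Otimes>\<^sub>M lborel)"
  then obtain \<omega> s where x: "x = (\<omega>, s)" and \<omega>: "\<omega> \<in> space M"
    by (auto simp: space_pair_measure)
  have "(\<lambda>n. B (real_of_int \<lfloor>real (Suc n) * \<tau> s\<rfloor> / real (Suc n)) \<omega>) \<longlonglongrightarrow> B (\<tau> s) \<omega>"
    by (rule continuous_on_tendsto_compose[OF paths[OF \<omega>] LIMSEQ_floor_mult_divide])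
       (use \<tau>_nonneg in auto)
  then show "(\<lambda>n. (\<lambda>(\<omega>, s). B (real_of_int \<lfloor>real (Suc n) * \<tau> s\<rfloor> / real (Suc n)) \<omega>) x)
      \<longlonglongrightarrow> (\<lambda>(\<omega>, s). B (\<tau> s) \<omega>) x"
    by (simp add: x)
next
  fix n
  have grid_index: "(\<lambda>x. \<lfloor>real (Suc n) * \<tau> (snd x)\<rfloor>) \<in> measurable (M \<Otimes>\<^sub>M lborel) (count_space UNIV)"
    using \<tau>_meas by measurable
  have "(\<lambda>x. B (real_of_int \<lfloor>real (Suc n) * \<tau> (snd x)\<rfloor> / real (Suc n)) (fst x))
      \<in> borel_measurable (M \<Otimes>\<^sub>M lborel)"
    by (rule measurable_compose_countable'[OF _ grid_index, where f = "\<lambda>i x. B (real_of_int i / real (Suc n)) (fst x)"])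
       (use B_meas in auto)
  then show "(\<lambda>(\<omega>, s). B (real_of_int \<lfloor>real (Suc n) * \<tau> s\<rfloor> / real (Suc n)) \<omega>) \<in> borel_measurable (M \<Otimes>\<^sub>M lborel)"
    by (simp add: case_prod_beta)
qed

text \<open>Clamping the time to [t,T] gives a globally continuous coefficient and keeps the paths inside
  their domain of continuity, without changing the integrand on [t,T].\<close>
lemma measurable_std_BM_time_integrand:
  fixes g :: "real \<Rightarrow> real"
  assumes BM: "std_BM M B" and t: "0 \<le> t" "t \<le> T" and g: "continuous_on {t..T} g"
  shows "(\<lambda>(\<omega>, s). indicator {t..T} s * (g s * exp (l * (B s \<omega> - B t \<omega>))))
           \<in> borel_measurable (M \<Otimes>\<^sub>M lborel)"
proof -
  have B_meas[measurable]: "\<And>s. B s \<in> borel_measurable M"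
    and paths: "\<And>\<omega>. \<omega> \<in> space M \<Longrightarrow> continuous_on {0..} (\<lambda>s. B s \<omega>)"
    using BM by (simp_all add: std_BM_def)
  define \<tau> where "\<tau> s = min T (max t s)" for s
  have \<tau>_cont: "continuous_on UNIV \<tau>"
    unfolding \<tau>_def by (intro continuous_intros)
  have \<tau>_range: "\<tau> s \<in> {t..T}" for s
    using t by (auto simp: \<tau>_def)
  have [measurable]: "\<tau> \<in> borel_measurable borel"
    by (rule borel_measurable_continuous_onI[OF \<tau>_cont])
  have [measurable]: "(\<lambda>s. g (\<tau> s)) \<in> borel_measurable borel"
    by (intro borel_measurable_continuous_onI continuous_on_compose2[OF g \<tau>_cont]) (use \<tau>_range in auto)
  have [measurable]: "(\<lambda>(\<omega>, s). B (\<tau> s) \<omega>) \<in> borel_measurable (M \<Otimes>\<^sub>M lborel)"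
    by (rule measurable_continuous_paths[OF B_meas paths]) (use t in \<open>auto simp: \<tau>_def\<close>)
  have "(\<lambda>(\<omega>, s). indicator {t..T} s * (g (\<tau> s) * exp (l * (B (\<tau> s) \<omega> - B t \<omega>))))
          \<in> borel_measurable (M \<Otimes>\<^sub>M lborel)"
    by measurable
  then show ?thesis
    by (rule measurable_cong[THEN iffD1, rotated]) (auto simp: \<tau>_def split: split_indicator)
qed

lemma nn_integral_std_BM_time_integrand:
  fixes g :: "real \<Rightarrow> real"
  assumes BM: "std_BM M B" and t: "0 \<le> t" and g_nonneg: "\<And>s. s \<in> {t..T} \<Longrightarrow> 0 \<le> g s"
  shows "(\<integral>\<^sup>+\<omega>. ennreal (indicator {t..T} s * (g s * exp (l * (B s \<omega> - B t \<omega>)))) \<partial>M)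
    = ennreal (indicator {t..T} s * (g s * exp (l\<^sup>2 * (s - t) / 2)))"
proof (cases "s \<in> {t..T}")
  case True
  have [measurable]: "\<And>s. B s \<in> borel_measurable M"
    using BM by (simp add: std_BM_def)
  have "(\<integral>\<^sup>+\<omega>. ennreal (indicator {t..T} s * (g s * exp (l * (B s \<omega> - B t \<omega>)))) \<partial>M)
      = (\<integral>\<^sup>+\<omega>. ennreal (g s) * ennreal (exp (l * (B s \<omega> - B t \<omega>))) \<partial>M)"
    using True g_nonneg by (intro nn_integral_cong) (simp add: ennreal_mult)
  also have "\<dots> = ennreal (g s) * ennreal (exp (l\<^sup>2 * (s - t) / 2))"
    using True t by (subst nn_integral_cmult) (auto simp: std_BM_exp_increment[OF BM])
  finally show ?thesis
    using True g_nonneg by (simp add: ennreal_mult)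
qed simp

lemma std_BM_expectation_time_integral:
  fixes g :: "real \<Rightarrow> real"
  assumes BM: "std_BM M B" and t: "0 \<le> t" "t \<le> T" and g: "continuous_on {t..T} g"
    and g_nonneg: "\<And>s. s \<in> {t..T} \<Longrightarrow> 0 \<le> g s"
  shows "(\<integral>\<omega>. (LINT s:{t..T}|lborel. g s * exp (l * (B s \<omega> - B t \<omega>))) \<partial>M)
         = (LINT s:{t..T}|lborel. g s * exp (l\<^sup>2 * (s - t) / 2))"
proof -
  interpret prob_space M
    using BM by (simp add: std_BM_def)
  interpret pair_sigma_finite M lborel
    by (simp add: pair_sigma_finite_def sigma_finite_measure_axioms lborel.sigma_finite_measure_axioms)
  define F where "F \<omega> s = indicator {t..T} s * (g s * exp (l * (B s \<omega> - B t \<omega>)))" for \<omega> s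
  have F_meas: "(\<lambda>(\<omega>, s). F \<omega> s) \<in> borel_measurable (M \<Otimes>\<^sub>M lborel)"
    unfolding F_def by (rule measurable_std_BM_time_integrand[OF BM t g])
  have F_nonneg: "0 \<le> F \<omega> s" for \<omega> s
    using g_nonneg by (simp add: F_def split: split_indicator)
  have F_integrable: "integrable lborel (F \<omega>)" if "\<omega> \<in> space M" for \<omega>
  proof -
    have "continuous_on {t..T} (\<lambda>s. B s \<omega>)"
      using BM that t by (auto simp: std_BM_def intro: continuous_on_subset)
    then have "set_integrable lborel {t..T} (\<lambda>s. g s * exp (l * (B s \<omega> - B t \<omega>)))"
      by (intro borel_integrable_atLeastAtMost' continuous_intros g)
    then show ?thesis
      by (simp add: set_integrable_def F_def[abs_def])
  qed
  have mean_F: "(\<integral>\<^sup>+\<omega>. ennreal (F \<omega> s) \<partial>M) = ennreal (indicator {t..T} s * (g s * exp (l\<^sup>2 * (s - t) / 2)))"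
    for s
    unfolding F_def by (rule nn_integral_std_BM_time_integrand[OF BM t(1) g_nonneg])
  have limit_integrable: "integrable lborel (\<lambda>s. indicator {t..T} s * (g s * exp (l\<^sup>2 * (s - t) / 2)))"
    using borel_integrable_atLeastAtMost'[of t T "\<lambda>s. g s * exp (l\<^sup>2 * (s - t) / 2)"] g
    by (simp add: set_integrable_def continuous_intros)
  have "(\<integral>\<omega>. (LINT s:{t..T}|lborel. g s * exp (l * (B s \<omega> - B t \<omega>))) \<partial>M)
      = (\<integral>\<omega>. (\<integral>s. F \<omega> s \<partial>lborel) \<partial>M)"
    by (simp add: set_lebesgue_integral_def F_def)
  also have "\<dots> = enn2real (\<integral>\<^sup>+\<omega>. ennreal (\<integral>s. F \<omega> s \<partial>lborel) \<partial>M)"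
    using F_meas F_nonneg
    by (intro integral_eq_nn_integral lborel.borel_measurable_lebesgue_integral integral_nonneg_AE)
       (auto simp: case_prod_beta)
  also have "(\<integral>\<^sup>+\<omega>. ennreal (\<integral>s. F \<omega> s \<partial>lborel) \<partial>M) = (\<integral>\<^sup>+\<omega>. (\<integral>\<^sup>+s. ennreal (F \<omega> s) \<partial>lborel) \<partial>M)"
    using F_integrable F_nonneg by (intro nn_integral_cong nn_integral_eq_integral[symmetric]) auto
  also have "\<dots> = (\<integral>\<^sup>+s. (\<integral>\<^sup>+\<omega>. ennreal (F \<omega> s) \<partial>M) \<partial>lborel)"
    using F_meas by (intro Fubini'[symmetric]) (simp add: case_prod_beta)
  also have "\<dots> = ennreal (\<integral>s. indicator {t..T} s * (g s * exp (l\<^sup>2 * (s - t) / 2)) \<partial>lborel)"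
    unfolding mean_F using limit_integrable g_nonneg
    by (intro nn_integral_eq_integral) (auto split: split_indicator)
  finally show ?thesis
    using g_nonneg by (simp add: set_lebesgue_integral_def integral_nonneg split: split_indicator)
qed

text \<open>The deterministic part of \<open>W\<close>: with \<open>q = 1/(1-\<alpha>)\<close> and \<open>c = c\<^sub>1 - \<rho>/(1-\<alpha>)\<close>, \<open>W(t,z,h)\<close> is a
  power of \<open>z\<close> times \<open>G h\<close>. The functions prefixed by d are the derivatives in \<open>h\<close>. As \<open>c\<close> occurs
  in no assumption, the locale predicate has no \<open>c\<close> argument.\<close>
locale habit_discount =
  fixes \<delta> fI m0 m1 \<kappa> q c t T :: real
  assumes \<delta>: "\<delta> > 0" and fI: "fI > 0" and m0: "m0 \<ge> 0" and m1: "m1 \<ge> 0" and \<kappa>: "\<kappa> > 0"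
    and q: "q > 0" and t: "0 \<le> t" "t \<le> T"
begin

abbreviation habit :: "real \<Rightarrow> real \<Rightarrow> real" where
  "habit h s \<equiv> H2 \<delta> fI t h s"

abbreviation rate :: "real \<Rightarrow> real \<Rightarrow> real" where
  "rate h u \<equiv> MH2 m0 m1 \<kappa> \<delta> fI t h u"

definition drate :: "real \<Rightarrow> real \<Rightarrow> real" where
  "drate h u = - (m1 * \<kappa> * habit h u powr (- \<kappa> - 1) * exp (- \<delta> * (u - t)))"

definition Phi :: "real \<Rightarrow> real \<Rightarrow> real" where
  "Phi h s = integral {t..s} (rate h)"

definition dPhi :: "real \<Rightarrow> real \<Rightarrow> real" where
  "dPhi h s = integral {t..s} (drate h)"

definition g :: "real \<Rightarrow> real \<Rightarrow> real" where
  "g h s = habit h s * exp (c * (s - t) - q * Phi h s)"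

definition dg :: "real \<Rightarrow> real \<Rightarrow> real" where
  "dg h s = (exp (- \<delta> * (s - t)) - q * habit h s * dPhi h s) * exp (c * (s - t) - q * Phi h s)"

definition G :: "real \<Rightarrow> real" where
  "G h = integral {t..T} (g h)"

definition dG :: "real \<Rightarrow> real" where
  "dG h = integral {t..T} (dg h)"

definition C0 :: "real \<Rightarrow> real" where
  "C0 h = m1 * h powr (- \<kappa> - 1) * (h + fI / \<delta>) * q / \<delta> * exp (\<delta> * \<kappa> * T) + 1"

lemma decay_bounds: "t \<le> s \<Longrightarrow> 0 < exp (- \<delta> * (s - t)) \<and> exp (- \<delta> * (s - t)) \<le> 1"
  using \<delta> by simp

lemma habit_lower: "h > 0 \<Longrightarrow> t \<le> s \<Longrightarrow> h * exp (- \<delta> * (s - t)) \<le> habit h s"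
  using decay_bounds[of s] \<delta> fI unfolding H2_def by simp

lemma habit_pos: "h > 0 \<Longrightarrow> t \<le> s \<Longrightarrow> habit h s > 0"
  using habit_lower[of h s] by (smt (verit) exp_gt_zero mult_pos_pos)

lemma habit_upper: "h > 0 \<Longrightarrow> t \<le> s \<Longrightarrow> habit h s \<le> h + fI / \<delta>"
  using decay_bounds[of s] \<delta> fI unfolding H2_def
  by (smt (verit) divide_pos_pos mult_left_le mult_nonneg_nonneg)

lemma habit_has_derivative: "((\<lambda>h. habit h s) has_real_derivative exp (- \<delta> * (s - t))) (at h within U)"
  unfolding H2_def by (auto intro!: derivative_eq_intros)

lemma continuous_on_habit [continuous_intros]:
  "continuous_on S f \<Longrightarrow> continuous_on S k \<Longrightarrow> continuous_on S (\<lambda>x. habit (f x) (k x))"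
  unfolding H2_def by (intro continuous_intros)

lemma rate_has_derivative:
  assumes "h > 0" "t \<le> u"
  shows "((\<lambda>h. rate h u) has_real_derivative drate h u) (at h within U)"
  using habit_pos[OF assms] unfolding MH2_def drate_def
  by (auto intro!: derivative_eq_intros habit_has_derivative simp: powr_diff field_simps)

lemma continuous_on_rate: "continuous_on ({0<..} \<times> {t..T}) (\<lambda>(h, u). rate h u)"
  unfolding MH2_def case_prod_beta
  by (intro continuous_intros) (auto dest: habit_pos)

lemma continuous_on_drate: "continuous_on ({0<..} \<times> {t..T}) (\<lambda>(h, u). drate h u)"
  unfolding drate_def case_prod_beta
  by (intro continuous_intros) (auto dest: habit_pos)

lemma continuous_on_Phi: "continuous_on ({0<..} \<times> {t..T}) (\<lambda>x. Phi (fst x) (snd x))"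
  using continuous_on_integral_upper_limit[OF continuous_on_rate] by (simp add: Phi_def case_prod_beta)

lemma continuous_on_dPhi: "continuous_on ({0<..} \<times> {t..T}) (\<lambda>x. dPhi (fst x) (snd x))"
  using continuous_on_integral_upper_limit[OF continuous_on_drate] by (simp add: dPhi_def case_prod_beta)

lemma continuous_on_g: "continuous_on ({0<..} \<times> {t..T}) (\<lambda>(h, s). g h s)"
  unfolding g_def case_prod_beta by (intro continuous_intros continuous_on_Phi)

lemma continuous_on_dg: "continuous_on ({0<..} \<times> {t..T}) (\<lambda>(h, s). dg h s)"
  unfolding dg_def case_prod_beta by (intro continuous_intros continuous_on_Phi continuous_on_dPhi)

lemma Phi_has_derivative:
  assumes "h > 0" "t \<le> s" "s \<le> T"
  shows "((\<lambda>h. Phi h s) has_real_derivative dPhi h s) (at h within {0<..})"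
  unfolding Phi_def dPhi_def
proof (rule leibniz_rule_field_derivative[of "{0<..}" t s, unfolded box_real])
  show "continuous_on ({0<..} \<times> {t..s}) (\<lambda>(x, u). drate x u)"
    by (rule continuous_on_subset[OF continuous_on_drate]) (use assms in auto)
  fix x :: real assume "x \<in> {0<..}"
  then have "continuous_on {t..T} (rate x)"
    by (rule continuous_on_Pair_slice[OF continuous_on_rate])
  then have "continuous_on {t..s} (rate x)"
    by (rule continuous_on_subset) (use assms in auto)
  then show "rate x integrable_on {t..s}"
    by (rule integrable_continuous_interval)
qed (use assms in \<open>auto intro: rate_has_derivative\<close>)

lemma continuous_on_g_slice: "h > 0 \<Longrightarrow> continuous_on {t..T} (g h)"
  by (rule continuous_on_Pair_slice[OF continuous_on_g]) simp

lemma continuous_on_dg_slice: "h > 0 \<Longrightarrow> continuous_on {t..T} (dg h)"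
  by (rule continuous_on_Pair_slice[OF continuous_on_dg]) simp

lemma g_has_derivative:
  assumes "h > 0" "t \<le> s" "s \<le> T"
  shows "((\<lambda>h. g h s) has_real_derivative dg h s) (at h within {0<..})"
proof -
  have "((\<lambda>h. exp (c * (s - t) - q * Phi h s)) has_real_derivative
      exp (c * (s - t) - q * Phi h s) * (- q * dPhi h s)) (at h within {0<..})"
    using Phi_has_derivative[OF assms] by (auto intro!: derivative_eq_intros)
  from DERIV_mult[OF habit_has_derivative[of s] this] show ?thesis
    unfolding g_def dg_def by (simp add: algebra_simps)
qed

lemma G_has_derivative:
  assumes "h > 0"
  shows "(G has_real_derivative dG h) (at h)"
proof -
  have "(G has_real_derivative dG h) (at h within {0<..})"
    unfolding G_def dG_def
  proof (rule leibniz_rule_field_derivative[of "{0<..}" t T, unfolded box_real])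
    fix x s :: real assume "x \<in> {0<..}" "s \<in> {t..T}"
    then show "((\<lambda>x. g x s) has_real_derivative dg x s) (at x within {0<..})"
      by (simp add: g_has_derivative)
  next
    fix x :: real assume "x \<in> {0<..}"
    then show "g x integrable_on {t..T}"
      by (simp add: integrable_continuous_interval continuous_on_g_slice)
  qed (use assms continuous_on_dg in auto)
  moreover have "at h within {0<..} = at h"
    using assms by (intro at_within_open) auto
  ultimately show ?thesis
    by simp
qed

lemma Phi_nonneg:
  assumes "h > 0" "t \<le> s" "s \<le> T"
  shows "0 \<le> Phi h s"
proof -
  have "continuous_on {t..s} (rate h)"
    using continuous_on_Pair_slice[OF continuous_on_rate, of h] assms
    by (auto intro: continuous_on_subset)
  then show ?thesis
    unfolding Phi_def MH2_def using m0 m1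
    by (intro integral_nonneg) (auto simp: integrable_continuous_interval)
qed

lemma drate_bounds:
  assumes h: "h > 0" and u: "t \<le> u"
  shows "0 \<le> - drate h u \<and> - drate h u \<le> m1 * \<kappa> * h powr (- \<kappa> - 1) * exp (\<delta> * \<kappa> * (u - t))"
proof -
  define e where "e = exp (- \<delta> * (u - t))"
  have e: "0 < e"
    by (simp add: e_def)
  have "habit h u powr (- \<kappa> - 1) \<le> (h * e) powr (- \<kappa> - 1)"
    using \<kappa> h e habit_lower[OF h u] by (intro powr_mono2') (auto simp: e_def)
  also have "\<dots> = h powr (- \<kappa> - 1) * exp (- \<delta> * (u - t) * (- \<kappa> - 1))"
    using h by (simp add: powr_mult e_def exp_powr_real)
  finally have "habit h u powr (- \<kappa> - 1) * e \<le> h powr (- \<kappa> - 1) * exp (- \<delta> * (u - t) * (- \<kappa> - 1)) * e"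
    using e by (simp add: mult_right_mono)
  also have "\<dots> = h powr (- \<kappa> - 1) * exp (\<delta> * \<kappa> * (u - t))"
    unfolding e_def mult.assoc exp_add[symmetric] by (simp add: algebra_simps)
  finally show ?thesis
    using m1 \<kappa> e unfolding drate_def e_def by (simp add: mult_left_mono mult.assoc)
qed

lemma dPhi_bounds:
  assumes h: "h > 0" and s: "t \<le> s" "s \<le> T"
  shows "0 \<le> - dPhi h s \<and> - dPhi h s \<le> m1 * h powr (- \<kappa> - 1) * exp (\<delta> * \<kappa> * T) / \<delta>"
proof -
  define K where "K = m1 * \<kappa> * h powr (- \<kappa> - 1)"
  have K: "0 \<le> K"
    using m1 \<kappa> by (simp add: K_def)
  have "continuous_on {t..s} (drate h)"
    using continuous_on_Pair_slice[OF continuous_on_drate, of h] h s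
    by (auto intro: continuous_on_subset)
  then have int: "(\<lambda>u. - drate h u) integrable_on {t..s}"
    by (simp add: integrable_continuous_interval integrable_neg)
  have minus_dPhi: "- dPhi h s = integral {t..s} (\<lambda>u. - drate h u)"
    by (simp add: dPhi_def integral_neg)
  have "0 \<le> - dPhi h s"
    unfolding minus_dPhi by (rule integral_nonneg[OF int]) (use drate_bounds h in auto)
  moreover have "- dPhi h s \<le> integral {t..s} (\<lambda>u. K * exp (\<delta> * \<kappa> * (u - t)))"
    unfolding minus_dPhi
    by (rule integral_le[OF int])
       (use drate_bounds h in \<open>auto simp: K_def intro!: integrable_continuous_interval continuous_intros\<close>)
  moreover have "integral {t..s} (\<lambda>u. K * exp (\<delta> * \<kappa> * (u - t))) \<le> K * (exp (\<delta> * \<kappa> * T) / (\<delta> * \<kappa>))"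
    using mult_left_mono[OF integral_exp_affine_le[of "\<delta> * \<kappa>" t s T] K] \<delta> \<kappa> t s by simp
  moreover have "K * (exp (\<delta> * \<kappa> * T) / (\<delta> * \<kappa>)) = m1 * h powr (- \<kappa> - 1) * exp (\<delta> * \<kappa> * T) / \<delta>"
    using \<kappa> by (simp add: K_def field_simps)
  ultimately show ?thesis
    by linarith
qed

lemma dg_bounds:
  assumes h: "h > 0" and s: "t \<le> s" "s \<le> T"
  shows "0 < dg h s \<and> dg h s \<le> C0 h * exp (c * (s - t))"
proof -
  define E where "E = exp (c * (s - t) - q * Phi h s)"
  have E: "0 < E" "E \<le> exp (c * (s - t))"
    using Phi_nonneg[OF h s] q by (auto simp: E_def)
  have habit: "0 < habit h s" "habit h s \<le> h + fI / \<delta>"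
    using habit_pos[OF h s(1)] habit_upper[OF h s(1)] by auto
  note dPhi = dPhi_bounds[OF h s]
  have "0 \<le> q * habit h s * (- dPhi h s)"
    using q habit dPhi by (intro mult_nonneg_nonneg) auto
  moreover have "q * habit h s * (- dPhi h s) \<le> q * (h + fI / \<delta>) * (m1 * h powr (- \<kappa> - 1) * exp (\<delta> * \<kappa> * T) / \<delta>)"
    using q habit dPhi by (intro mult_mono) auto
  moreover have "q * (h + fI / \<delta>) * (m1 * h powr (- \<kappa> - 1) * exp (\<delta> * \<kappa> * T) / \<delta>) = C0 h - 1"
    by (simp add: C0_def field_simps)
  ultimately have factor: "0 < exp (- \<delta> * (s - t)) - q * habit h s * dPhi h s"
    "exp (- \<delta> * (s - t)) - q * habit h s * dPhi h s \<le> C0 h"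
    using decay_bounds[OF s(1)] by linarith+
  have "dg h s = (exp (- \<delta> * (s - t)) - q * habit h s * dPhi h s) * E"
    by (simp add: dg_def E_def)
  with factor E show ?thesis
    by (simp add: mult_mono)
qed

lemma dG_bounds:
  assumes h: "h > 0" and c1: "c \<le> c1" "0 < c1"
  shows "0 \<le> dG h \<and> dG h \<le> C0 h * exp (c1 * T) / c1"
proof -
  have int: "dg h integrable_on {t..T}"
    using continuous_on_dg_slice[OF h] by (rule integrable_continuous_interval)
  have C0: "0 \<le> C0 h"
    using dg_bounds[OF h order.refl t(2)] by (smt (verit) exp_gt_zero mult_nonpos_nonneg)
  have "dg h s \<le> C0 h * exp (c1 * (s - t))" if "s \<in> {t..T}" for s
  proof -
    have "dg h s \<le> C0 h * exp (c * (s - t))"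
      using dg_bounds[OF h] that by auto
    also have "\<dots> \<le> C0 h * exp (c1 * (s - t))"
      using that c1 C0 by (auto intro!: mult_left_mono mult_right_mono)
    finally show ?thesis .
  qed
  then have "dG h \<le> integral {t..T} (\<lambda>s. C0 h * exp (c1 * (s - t)))"
    unfolding dG_def by (intro integral_le[OF int] integrable_continuous_interval continuous_intros) auto
  also have "\<dots> = C0 h * integral {t..T} (\<lambda>s. exp (c1 * (s - t)))"
    by simp
  also have "\<dots> \<le> C0 h * (exp (c1 * T) / c1)"
    by (rule mult_left_mono[OF integral_exp_affine_le C0]) (use c1 t in auto)
  moreover have "0 \<le> dG h"
    unfolding dG_def by (rule integral_nonneg[OF int]) (use dg_bounds[OF h] in fastforce)
  ultimately show ?thesis
    by simp
qed

lemma dG_pos: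
  assumes "h > 0" "t < T"
  shows "0 < dG h"
  using integral_less_real[of t T "\<lambda>_. 0" "dg h"] continuous_on_dg_slice[of h] dg_bounds[of h] assms
  by (auto simp: dG_def)

end

definition growth_rate :: "real \<Rightarrow> real \<Rightarrow> real \<Rightarrow> real" where
  "growth_rate \<alpha> r \<theta> = 1/2 * (\<alpha> * \<theta> / (1 - \<alpha>))\<^sup>2 + \<alpha> / (1 - \<alpha>) * (r + 1/2 * \<theta>\<^sup>2)"

definition W_factor :: "real \<Rightarrow> real \<Rightarrow> real" where
  "W_factor \<alpha> z = z powr (\<alpha> / (\<alpha> - 1)) * (1 - \<alpha>) * \<alpha> powr (\<alpha> / (1 - \<alpha>))"

lemma growth_rate_pos:
  assumes "0 < \<alpha>" "\<alpha> < 1" "0 < r"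
  shows "0 < growth_rate \<alpha> r \<theta>"
proof -
  have "0 < \<alpha> / (1 - \<alpha>) * (r + 1/2 * \<theta>\<^sup>2)"
    using assms by (intro mult_pos_pos add_pos_nonneg) auto
  moreover have "0 \<le> 1/2 * (\<alpha> * \<theta> / (1 - \<alpha>))\<^sup>2"
    by simp
  ultimately show ?thesis
    unfolding growth_rate_def by linarith
qed

lemma W_factor_nonneg: "\<alpha> < 1 \<Longrightarrow> 0 \<le> W_factor \<alpha> z"
  by (simp add: W_factor_def)

lemma u_hat_mult_exp:
  assumes "0 < \<alpha>" "\<alpha> < 1" "0 < z"
  shows "u_hat \<alpha> (z * exp X) H = W_factor \<alpha> z * H * exp (\<alpha> / (\<alpha> - 1) * X)"
proof -
  have "\<alpha> / (1 - \<alpha>) = - (\<alpha> / (\<alpha> - 1))"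
    using assms by (simp add: field_simps)
  then have "\<alpha> powr (\<alpha> / (1 - \<alpha>)) = inverse (\<alpha> powr (\<alpha> / (\<alpha> - 1)))"
    by (simp add: powr_minus)
  moreover have "(z * exp X / \<alpha>) powr (\<alpha> / (\<alpha> - 1))
      = z powr (\<alpha> / (\<alpha> - 1)) * exp (\<alpha> / (\<alpha> - 1) * X) / \<alpha> powr (\<alpha> / (\<alpha> - 1))"
    using assms by (simp add: powr_divide powr_mult exp_powr_real mult.commute)
  ultimately show ?thesis
    unfolding u_hat_def W_factor_def by (simp add: divide_inverse)
qed

lemma discounted_u_hat_eq:
  assumes "0 < \<alpha>" "\<alpha> < 1" "0 < z"
  shows "exp (- (\<rho> * S + \<Phi>)) * u_hat \<alpha> (z * exp ((\<rho> - r) * S + \<Phi> - \<theta>\<^sup>2 / 2 * S - \<theta> * \<Delta>)) H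
    = W_factor \<alpha> z * (H * exp ((growth_rate \<alpha> r \<theta> - \<rho> / (1 - \<alpha>)) * S - 1 / (1 - \<alpha>) * \<Phi>))
      * exp (- ((\<alpha> * \<theta> / (1 - \<alpha>))\<^sup>2 * S / 2)) * exp (\<alpha> * \<theta> / (1 - \<alpha>) * \<Delta>)"
proof -
  define p where "p = \<alpha> / (\<alpha> - 1)"
  have p: "\<alpha> / (1 - \<alpha>) = - p" "1 / (1 - \<alpha>) = 1 - p" "\<alpha> * \<theta> / (1 - \<alpha>) = - p * \<theta>"
    "\<rho> / (1 - \<alpha>) = \<rho> * (1 - p)"
    using assms by (auto simp: p_def field_simps)
  define X where "X = (\<rho> - r) * S + \<Phi> - \<theta>\<^sup>2 / 2 * S - \<theta> * \<Delta>"
  have "- (\<rho> * S + \<Phi>) + \<alpha> / (\<alpha> - 1) * X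
      = (growth_rate \<alpha> r \<theta> - \<rho> / (1 - \<alpha>)) * S - 1 / (1 - \<alpha>) * \<Phi>
        + - ((\<alpha> * \<theta> / (1 - \<alpha>))\<^sup>2 * S / 2) + \<alpha> * \<theta> / (1 - \<alpha>) * \<Delta>"
    unfolding growth_rate_def X_def p p_def[symmetric] by (simp add: algebra_simps power2_eq_square)
  then have exponent: "exp (- (\<rho> * S + \<Phi>)) * exp (\<alpha> / (\<alpha> - 1) * X)
      = exp ((growth_rate \<alpha> r \<theta> - \<rho> / (1 - \<alpha>)) * S - 1 / (1 - \<alpha>) * \<Phi>)
        * exp (- ((\<alpha> * \<theta> / (1 - \<alpha>))\<^sup>2 * S / 2)) * exp (\<alpha> * \<theta> / (1 - \<alpha>) * \<Delta>)"
    by (simp only: mult_exp_exp)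
  have "exp (- (\<rho> * S + \<Phi>)) * u_hat \<alpha> (z * exp X) H
      = W_factor \<alpha> z * H * (exp (- (\<rho> * S + \<Phi>)) * exp (\<alpha> / (\<alpha> - 1) * X))"
    by (simp add: u_hat_mult_exp[OF assms])
  then show ?thesis
    unfolding exponent X_def[symmetric] by (simp add: mult.assoc)
qed

lemma W_eq_W_factor_G:
  assumes BM: "std_BM M B"
    and model: "habit_discount \<delta> fI m0 m1 \<kappa> (1 / (1 - \<alpha>)) t T"
    and \<alpha>: "0 < \<alpha>" "\<alpha> < 1" and z: "0 < z" and h: "0 < h"
  shows "W M B T r \<rho> \<theta> m0 m1 \<kappa> \<delta> \<alpha> fI t z h
    = W_factor \<alpha> z * habit_discount.G \<delta> fI m0 m1 \<kappa> (1 / (1 - \<alpha>)) (growth_rate \<alpha> r \<theta> - \<rho> / (1 - \<alpha>)) t T h"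
proof -
  interpret habit_discount \<delta> fI m0 m1 \<kappa> "1 / (1 - \<alpha>)" "growth_rate \<alpha> r \<theta> - \<rho> / (1 - \<alpha>)" t T
    by (rule model)
  define l where "l = \<alpha> * \<theta> / (1 - \<alpha>)"
  define f where "f s = W_factor \<alpha> z * g h s * exp (- (l\<^sup>2 * (s - t) / 2))" for s
  have rate_cont: "continuous_on {t..s} (rate h)" if "s \<le> T" for s
    using continuous_on_Pair_slice[OF continuous_on_rate, of h] h that
    by (auto intro: continuous_on_subset)
  have integrand: "exp (- (LINT u:{t..s}|lborel. \<rho> + rate h u)) * u_hat \<alpha> (Z2 B r \<rho> \<theta> m0 m1 \<kappa> \<delta> fI t z h s \<omega>) (habit h s)
      = f s * exp (l * (B s \<omega> - B t \<omega>))" if "s \<in> {t..T}" for s \<omega>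
  proof -
    have discount: "(LINT u:{t..s}|lborel. \<rho> + rate h u) = \<rho> * (s - t) + Phi h s"
      using that rate_cont[of s]
      by (simp add: set_integral_Icc_eq_integral continuous_intros integral_add integrable_continuous_interval Phi_def)
    have cumulative_rate: "(LINT u:{t..s}|lborel. rate h u) = Phi h s"
      using that rate_cont[of s] by (simp add: set_integral_Icc_eq_integral Phi_def)
    show ?thesis
      unfolding Z2_def discount cumulative_rate f_def g_def l_def by (rule discounted_u_hat_eq[OF \<alpha> z])
  qed
  have f_cont: "continuous_on {t..T} f"
    unfolding f_def using continuous_on_g_slice[OF h] by (intro continuous_intros) auto
  have f_nonneg: "0 \<le> f s" if "s \<in> {t..T}" for s
    using habit_pos[OF h] that W_factor_nonneg[OF \<alpha>(2)]
    by (simp add: f_def g_def less_imp_le)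
  have "W M B T r \<rho> \<theta> m0 m1 \<kappa> \<delta> \<alpha> fI t z h
      = (\<integral>\<omega>. (LINT s:{t..T}|lborel. f s * exp (l * (B s \<omega> - B t \<omega>))) \<partial>M)"
    unfolding W_def
    by (intro Bochner_Integration.integral_cong refl set_lebesgue_integral_cong) (auto simp: integrand)
  also have "\<dots> = (LINT s:{t..T}|lborel. f s * exp (l\<^sup>2 * (s - t) / 2))"
    by (rule std_BM_expectation_time_integral[OF BM t f_cont f_nonneg])
  also have "\<dots> = (LINT s:{t..T}|lborel. W_factor \<alpha> z * g h s)"
    by (intro set_lebesgue_integral_cong) (auto simp: f_def mult_exp_exp)
  also have "\<dots> = W_factor \<alpha> z * G h"
    using continuous_on_g_slice[OF h]
    by (simp add: set_integral_mult_right set_integral_Icc_eq_integral G_def)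
  finally show ?thesis .
qed

lemma W_has_real_derivative:
  assumes BM: "std_BM M B"
    and model: "habit_discount \<delta> fI m0 m1 \<kappa> (1 / (1 - \<alpha>)) t T"
    and \<alpha>: "0 < \<alpha>" "\<alpha> < 1" and z: "0 < z" and h: "0 < h"
  shows "((\<lambda>h'. W M B T r \<rho> \<theta> m0 m1 \<kappa> \<delta> \<alpha> fI t z h') has_real_derivative
      W_factor \<alpha> z * habit_discount.dG \<delta> fI m0 m1 \<kappa> (1 / (1 - \<alpha>)) (growth_rate \<alpha> r \<theta> - \<rho> / (1 - \<alpha>)) t T h)
    (at h)"
proof -
  interpret habit_discount \<delta> fI m0 m1 \<kappa> "1 / (1 - \<alpha>)" "growth_rate \<alpha> r \<theta> - \<rho> / (1 - \<alpha>)" t T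
    by (rule model)
  have "((\<lambda>h'. W_factor \<alpha> z * G h') has_real_derivative W_factor \<alpha> z * dG h) (at h)"
    by (rule DERIV_cmult[OF G_has_derivative[OF h]])
  then show ?thesis
    by (rule has_field_derivative_transform_within_open[where S = "{0<..}"])
       (use h in \<open>auto simp: W_eq_W_factor_G[OF BM model \<alpha> z]\<close>)
qed

lemma W_derivative_bounds:
  assumes BM: "std_BM M B"
    and model: "habit_discount \<delta> fI m0 m1 \<kappa> (1 / (1 - \<alpha>)) t T"
    and \<alpha>: "0 < \<alpha>" "\<alpha> < 1" and z: "0 < z" and h: "0 < h" and \<rho>: "0 < \<rho>" and r: "0 < r"
  shows "\<exists>D. ((\<lambda>h'. W M B T r \<rho> \<theta> m0 m1 \<kappa> \<delta> \<alpha> fI t z h') has_real_derivative D) (at h) \<and> 0 \<le> D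
    \<and> D \<le> W_factor \<alpha> z * habit_discount.C0 \<delta> fI m1 \<kappa> (1 / (1 - \<alpha>)) T h
            * exp (growth_rate \<alpha> r \<theta> * T) / growth_rate \<alpha> r \<theta>"
proof -
  interpret habit_discount \<delta> fI m0 m1 \<kappa> "1 / (1 - \<alpha>)" "growth_rate \<alpha> r \<theta> - \<rho> / (1 - \<alpha>)" t T
    by (rule model)
  have "growth_rate \<alpha> r \<theta> - \<rho> / (1 - \<alpha>) \<le> growth_rate \<alpha> r \<theta>"
    using \<alpha> \<rho> by simp
  from dG_bounds[OF h this growth_rate_pos[OF \<alpha> r]]
  have dG: "0 \<le> dG h" "dG h \<le> C0 h * exp (growth_rate \<alpha> r \<theta> * T) / growth_rate \<alpha> r \<theta>"
    by auto
  have "0 \<le> W_factor \<alpha> z * dG h"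
    using dG(1) W_factor_nonneg[OF \<alpha>(2)] by simp
  moreover have "W_factor \<alpha> z * dG h \<le> W_factor \<alpha> z * (C0 h * exp (growth_rate \<alpha> r \<theta> * T) / growth_rate \<alpha> r \<theta>)"
    by (rule mult_left_mono[OF dG(2) W_factor_nonneg[OF \<alpha>(2)]])
  ultimately show ?thesis
    using W_has_real_derivative[OF BM model \<alpha> z h] by (intro exI[of _ "W_factor \<alpha> z * dG h"]) (simp add: mult.assoc)
qed

lemma W_factor_limits:
  assumes "0 < \<alpha>" "\<alpha> < 1"
  shows "((\<lambda>z. W_factor \<alpha> z * D) \<longlongrightarrow> 0) at_top"
    and "0 < D \<Longrightarrow> filterlim (\<lambda>z. W_factor \<alpha> z * D) at_top (at_right 0)"
proof -
  define p K where "p = \<alpha> / (\<alpha> - 1)" and "K = (1 - \<alpha>) * \<alpha> powr (\<alpha> / (1 - \<alpha>)) * D"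
  have W_factor: "W_factor \<alpha> z * D = z powr p * K" for z
    by (simp add: W_factor_def p_def K_def)
  have "p < 0"
    using assms by (simp add: p_def divide_pos_neg)
  then show "((\<lambda>z. W_factor \<alpha> z * D) \<longlongrightarrow> 0) at_top"
    unfolding W_factor by real_asymp
  assume "0 < D"
  with assms have "0 < K"
    by (simp add: K_def)
  with \<open>p < 0\<close> show "filterlim (\<lambda>z. W_factor \<alpha> z * D) at_top (at_right 0)"
    unfolding W_factor by real_asymp
qed

lemma deriv_W_limits:
  assumes BM: "std_BM M B"
    and model: "habit_discount \<delta> fI m0 m1 \<kappa> (1 / (1 - \<alpha>)) t T"
    and \<alpha>: "0 < \<alpha>" "\<alpha> < 1" and h: "0 < h" and tT: "t < T"
  shows "((\<lambda>z. deriv (\<lambda>h'. W M B T r \<rho> \<theta> m0 m1 \<kappa> \<delta> \<alpha> fI t z h') h) \<longlongrightarrow> 0) at_top"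
    and "filterlim (\<lambda>z. deriv (\<lambda>h'. W M B T r \<rho> \<theta> m0 m1 \<kappa> \<delta> \<alpha> fI t z h') h) at_top (at_right 0)"
proof -
  interpret habit_discount \<delta> fI m0 m1 \<kappa> "1 / (1 - \<alpha>)" "growth_rate \<alpha> r \<theta> - \<rho> / (1 - \<alpha>)" t T
    by (rule model)
  have deriv_eq: "\<forall>\<^sub>F z in F. W_factor \<alpha> z * dG h = deriv (\<lambda>h'. W M B T r \<rho> \<theta> m0 m1 \<kappa> \<delta> \<alpha> fI t z h') h"
    if "\<forall>\<^sub>F z in F. 0 < z" for F
    using that by eventually_elim (auto intro!: DERIV_imp_deriv[symmetric] W_has_real_derivative[OF BM model \<alpha> _ h])
  show "((\<lambda>z. deriv (\<lambda>h'. W M B T r \<rho> \<theta> m0 m1 \<kappa> \<delta> \<alpha> fI t z h') h) \<longlongrightarrow> 0) at_top"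
    by (rule tendsto_cong[THEN iffD1, OF deriv_eq[OF eventually_gt_at_top] W_factor_limits(1)[OF \<alpha>]])
  show "filterlim (\<lambda>z. deriv (\<lambda>h'. W M B T r \<rho> \<theta> m0 m1 \<kappa> \<delta> \<alpha> fI t z h') h) at_top (at_right 0)"
    by (rule filterlim_cong[OF refl refl deriv_eq[OF eventually_at_right_less], THEN iffD1,
          OF W_factor_limits(2)[OF \<alpha> dG_pos[OF h tT]]])
qed

theorem lemmaA1:
  fixes M :: "'a measure" and B :: "real \<Rightarrow> 'a \<Rightarrow> real"
    and T r \<mu> \<sigma> \<rho> m0 m1 \<kappa> \<delta> \<alpha> I \<theta> :: real and f :: "real \<Rightarrow> real"
  assumes BM: "std_BM M B"
    and T: "T > 0" and r: "r > 0" and \<sigma>: "\<sigma> > 0" and \<rho>: "\<rho> > 0"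
    and m0: "m0 \<ge> 0" and m1: "m1 \<ge> 0" and \<kappa>: "\<kappa> > 0" and \<delta>: "\<delta> > 0"
    and \<alpha>: "0 < \<alpha>" "\<alpha> < 1" and I: "I > 0" and fI: "f I > 0"
    and \<theta>: "\<theta> = (\<mu> - r) / \<sigma>"
  defines "Wf \<equiv> W M B T r \<rho> \<theta> m0 m1 \<kappa> \<delta> \<alpha> (f I)"
    and "C0 \<equiv> (\<lambda>h. m1 * h powr (- \<kappa> - 1) * (h + f I / \<delta>) / ((1 - \<alpha>) * \<delta>)
                  * exp (\<delta> * \<kappa> * T) + 1)"
    and "c1 \<equiv> 1/2 * (\<alpha> * \<theta> / (1 - \<alpha>))\<^sup>2 + \<alpha> / (1 - \<alpha>) * (r + 1/2 * \<theta>\<^sup>2)"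
  shows "c1 > 0 \<and>
    (\<forall>t z h. 0 \<le> t \<and> t \<le> T \<and> z > 0 \<and> h > 0 \<longrightarrow>
           (\<exists>D. ((\<lambda>h'. Wf t z h') has_real_derivative D) (at h)
              \<and> 0 \<le> D
              \<and> D \<le> z powr (\<alpha> / (\<alpha> - 1)) * (1 - \<alpha>) * \<alpha> powr (\<alpha> / (1 - \<alpha>)) * C0 h
                     * exp (c1 * T) / c1)) \<and>
    (\<forall>t h. 0 \<le> t \<and> t < T \<and> h > 0 \<longrightarrow>
           ((\<lambda>z. deriv (\<lambda>h'. Wf t z h') h) \<longlongrightarrow> 0) at_top) \<and>
    (\<forall>t h. 0 \<le> t \<and> t < T \<and> h > 0 \<longrightarrow>
           filterlim (\<lambda>z. deriv (\<lambda>h'. Wf t z h') h) at_top (at_right 0))"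
proof -
  have c1_eq: "c1 = growth_rate \<alpha> r \<theta>"
    by (simp add: c1_def growth_rate_def)
  have model: "habit_discount \<delta> (f I) m0 m1 \<kappa> (1 / (1 - \<alpha>)) t T" if "0 \<le> t" "t \<le> T" for t
    using \<delta> fI m0 m1 \<kappa> \<alpha> that by unfold_locales auto
  have C0_eq: "habit_discount.C0 \<delta> (f I) m1 \<kappa> (1 / (1 - \<alpha>)) T h = C0 h" for h
    unfolding habit_discount.C0_def[OF model[OF order.refl less_imp_le[OF T]]] C0_def using \<alpha> \<delta> by (simp add: field_simps)
  show ?thesis
  proof (intro conjI allI impI)
    show "c1 > 0"
      unfolding c1_eq by (rule growth_rate_pos[OF \<alpha> r])
    fix t z h :: real assume "0 \<le> t \<and> t \<le> T \<and> z > 0 \<and> h > 0"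
    with W_derivative_bounds[OF BM model \<alpha> _ _ \<rho> r, of t z h \<theta>]
    show "\<exists>D. ((\<lambda>h'. Wf t z h') has_real_derivative D) (at h) \<and> 0 \<le> D
        \<and> D \<le> z powr (\<alpha> / (\<alpha> - 1)) * (1 - \<alpha>) * \<alpha> powr (\<alpha> / (1 - \<alpha>)) * C0 h * exp (c1 * T) / c1"
      by (simp add: Wf_def c1_eq C0_eq W_factor_def)
  next
    fix t h :: real assume "0 \<le> t \<and> t < T \<and> h > 0"
    with deriv_W_limits[OF BM model \<alpha>, of t h]
    show "((\<lambda>z. deriv (\<lambda>h'. Wf t z h') h) \<longlongrightarrow> 0) at_top"
      and "filterlim (\<lambda>z. deriv (\<lambda>h'. Wf t z h') h) at_top (at_right 0)"
      by (simp_all add: Wf_def)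
  qed
qed

end
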